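(* Assume $M_h=\mathbb{P}_1$ (so $\Phi_h=M_h$). Then any solution $(\phi^{n+1},\mu^{n+1})\in\Phi_h\times M_h$ of the J$_\varepsilon$-scheme satisfies $$\delta_t\Big(\int_\Omega I_h(J_\varepsilon(\phi^{n+1}))\,d\boldsymbol x\Big)\le\int_\Omega M^J_\varepsilon(\phi^{n+1})|\nabla\mu^{n+1}|^2\,d\boldsymbol x+\int_\Omega|\nabla\phi^{n+1}|^2\,d\boldsymbol x,$$ where $M^J_\varepsilon(\phi^{n+1})|\nabla\mu^{n+1}|^2$ means $(M^J_\varepsilon(\phi^{n+1})\nabla\mu^{n+1})\cdot\nabla\mu^{n+1}$. Moreover, $$\int_\Omega I_h(J_\varepsilon(\phi^{n+1}))\,d\boldsymbol x\le C_1+C_2\,T,$$ where $C_1,C_2$ depend on the initial energy $E(\phi^0)$ and on $\int_\Omega I_h(J_\varepsilon(\phi^0))\,d\boldsymbol x$.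
   Context: $\Omega\subset\mathbb{R}^d$ ($d=1,2,3$) bounded, $\eta>0$, $\varepsilon\in(0,1/2)$. $F(\phi)=\frac1{4\eta^2}\phi^2(\phi-1)^2=F_c+F_e$ with $F_c(\phi)=\frac1{4\eta^2}(\phi^4-2\phi^3+\frac32\phi^2)$, $F_e(\phi)=-\frac1{8\eta^2}\phi^2$; $E(\phi)=\int_\Omega(\frac12|\nabla\phi|^2+F(\phi))d\boldsymbol x$. The interval $[0,T]$ is split into $N$ steps, $\Delta t=T/N$, $\delta_tf^{n+1}=(f^{n+1}-f^n)/\Delta t$, $n=0,\dots,N-1$. $\mathcal T_h$ is a structured triangulation of $\Omega$ in which every element $I$ has vertices $\boldsymbol x_0,\dots,\boldsymbol x_d$ with $\boldsymbol x_k-\boldsymbol x_0$ parallel to the $k$-th coordinate axis. $\Phi_h$ is the space of continuous piecewise $\mathbb{P}_1$ functions, $M_h$ the space of continuous piecewise $\mathbb{P}_k$ functions. $I_h$ is nodal $\mathbb{P}_1$ interpolation, $(f,g)_h=\int_\Omega I_h(fg)\,d\boldsymbol x$, $(\cdot,\cdot)$ the $L^2$ product. $J(\phi)=(1-2\phi)\arcsin(\sqrt{1-\phi})+\sqrt{(1-\phi)\phi}+2\arcsin(\sqrt{1/2})\,\phi$ on $[0,1]$ (so $J''(\phi)=1/\sqrt{\phi(1-\phi)}$); $J_\varepsilon\in C^2(\mathbb{R})$ equals $J$ on $[\varepsilon,1-\varepsilon]$ and its second-order Taylor polynomial at $\varepsilon$ (resp. $1-\varepsilon$) for $\phi<\varepsilon$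 (resp. $\phi>1-\varepsilon$). For $\phi\in\Phi_h$, $M^J_\varepsilon(\phi)$ is the piecewise constant diagonal matrix whose $k$-th entry on $I$ is $\Big(\frac{\phi(\boldsymbol x_k)-\phi(\boldsymbol x_0)}{J_\varepsilon'(\phi(\boldsymbol x_k))-J_\varepsilon'(\phi(\boldsymbol x_0))}\Big)^2$ if $\phi(\boldsymbol x_k)\neq\phi(\boldsymbol x_0)$ and $\big(1/J_\varepsilon''(\phi(\boldsymbol x_0))\big)^2$ otherwise. J$_\varepsilon$-scheme: given $\phi^n\in\Phi_h$ (starting from $\phi^0\in\Phi_h$), find $(\phi^{n+1},\mu^{n+1})\in\Phi_h\times M_h$ such that for all $(\bar\phi,\bar\mu)\in\Phi_h\times M_h$: $\frac1{\Delta t}(\phi^{n+1}-\phi^n,\bar\mu)_h+(M^J_\varepsilon(\phi^{n+1})\nabla\mu^{n+1},\nabla\bar\mu)=0$ and $(\nabla\phi^{n+1},\nabla\bar\phi)+(F_c'(\phi^{n+1})+F_e'(\phi^n),\bar\phi)=(\mu^{n+1},\bar\phi)_h$. *)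

theory Defs
  imports "HOL-Analysis.Analysis"
begin

definition Fc :: "real \<Rightarrow> real \<Rightarrow> real" where
  "Fc \<eta> p = (1 / (4 * \<eta>^2)) * (p^4 - 2 * p^3 + (3/2) * p^2)"

definition Fe :: "real \<Rightarrow> real \<Rightarrow> real" where
  "Fe \<eta> p = - (1 / (8 * \<eta>^2)) * p^2"

definition Fpot :: "real \<Rightarrow> real \<Rightarrow> real" where
  "Fpot \<eta> p = (1 / (4 * \<eta>^2)) * p^2 * (p - 1)^2"

definition Jfun :: "real \<Rightarrow> real" where
  "Jfun p = (1 - 2 * p) * arcsin (sqrt (1 - p)) + sqrt ((1 - p) * p)
            + 2 * arcsin (sqrt (1/2)) * p"

definition Jeps :: "real \<Rightarrow> real \<Rightarrow> real" where
  "Jeps \<epsilon> p =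
     (if p < \<epsilon> then Jfun \<epsilon> + deriv Jfun \<epsilon> * (p - \<epsilon>) + deriv (deriv Jfun) \<epsilon> / 2 * (p - \<epsilon>)^2
      else if p > 1 - \<epsilon> then Jfun (1 - \<epsilon>) + deriv Jfun (1 - \<epsilon>) * (p - (1 - \<epsilon>))
                 + deriv (deriv Jfun) (1 - \<epsilon>) / 2 * (p - (1 - \<epsilon>))^2
      else Jfun p)"

text \<open>An element is a pair (x0, h): its vertices are x0 and x0 + (h.b) b for each
  coordinate unit vector b (so x_k - x_0 is parallel to the k-th axis).\<close>

type_synonym 'a elem = "'a \<times> 'a"

definition vtx :: "'a::euclidean_space elem \<Rightarrow> 'a \<Rightarrow> 'a" where
  "vtx I b = fst I + (snd I \<bullet> b) *\<^sub>R b"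

definition verts :: "'a::euclidean_space elem \<Rightarrow> 'a set" where
  "verts I = insert (fst I) (vtx I ` Basis)"

definition cell :: "'a::euclidean_space elem \<Rightarrow> 'a set" where
  "cell I = convex hull (verts I)"

definition struct_triang :: "'a::euclidean_space elem set \<Rightarrow> bool" where
  "struct_triang \<T> \<longleftrightarrow> finite \<T>
     \<and> (\<forall>I\<in>\<T>. \<forall>b\<in>Basis. snd I \<bullet> b \<noteq> 0)
     \<and> inj_on cell \<T>
     \<and> (\<forall>I\<in>\<T>. \<forall>I'\<in>\<T>. I \<noteq> I' \<longrightarrow> cell I \<inter> cell I' = convex hull (verts I \<inter> verts I'))"

definition P1 :: "'a::euclidean_space elem set \<Rightarrow> ('a \<Rightarrow> real) \<Rightarrow> bool" where
  "P1 \<T> f \<longleftrightarrow> continuous_on (\<Union>(cell ` \<T>)) f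
     \<and> (\<forall>I\<in>\<T>. \<exists>a c. \<forall>x\<in>cell I. f x = a \<bullet> x + c)"

definition grad :: "('a::euclidean_space \<Rightarrow> real) \<Rightarrow> 'a \<Rightarrow> 'a" where
  "grad f x = (SOME D. GDERIV f x :> D)"

definition interp_cell :: "'a::euclidean_space elem \<Rightarrow> ('a \<Rightarrow> real) \<Rightarrow> 'a \<Rightarrow> real" where
  "interp_cell I g x = g (fst I)
     + (\<Sum>b\<in>Basis. ((x - fst I) \<bullet> b / (snd I \<bullet> b)) * (g (vtx I b) - g (fst I)))"

definition Ih :: "'a::euclidean_space elem set \<Rightarrow> ('a \<Rightarrow> real) \<Rightarrow> 'a \<Rightarrow> real" where
  "Ih \<T> g x = (if \<exists>I\<in>\<T>. x \<in> cell I
               then interp_cell (SOME I. I \<in> \<T> \<and> x \<in> cell I) g x else 0)"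

definition lumped :: "'a::euclidean_space elem set \<Rightarrow> 'a set \<Rightarrow> ('a \<Rightarrow> real) \<Rightarrow> ('a \<Rightarrow> real) \<Rightarrow> real" where
  "lumped \<T> \<Omega> f g = integral \<Omega> (Ih \<T> (\<lambda>x. f x * g x))"

text \<open>b-th diagonal entry of M^J_eps(phi) on element I.\<close>
definition MJ :: "real \<Rightarrow> ('a::euclidean_space \<Rightarrow> real) \<Rightarrow> 'a elem \<Rightarrow> 'a \<Rightarrow> real" where
  "MJ \<epsilon> \<phi> I b =
     (if \<phi> (vtx I b) \<noteq> \<phi> (fst I)
      then ((\<phi> (vtx I b) - \<phi> (fst I)) /
            (deriv (Jeps \<epsilon>) (\<phi> (vtx I b)) - deriv (Jeps \<epsilon>) (\<phi> (fst I))))^2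
      else (1 / deriv (deriv (Jeps \<epsilon>)) (\<phi> (fst I)))^2)"

definition mob_form :: "real \<Rightarrow> 'a::euclidean_space elem set \<Rightarrow> ('a \<Rightarrow> real) \<Rightarrow> ('a \<Rightarrow> real) \<Rightarrow> ('a \<Rightarrow> real) \<Rightarrow> real" where
  "mob_form \<epsilon> \<T> \<phi> \<mu> \<mu>b =
     (\<Sum>I\<in>\<T>. integral (cell I)
        (\<lambda>x. \<Sum>b\<in>Basis. MJ \<epsilon> \<phi> I b * (grad \<mu> x \<bullet> b) * (grad \<mu>b x \<bullet> b)))"

definition energy :: "real \<Rightarrow> 'a::euclidean_space set \<Rightarrow> ('a \<Rightarrow> real) \<Rightarrow> real" where
  "energy \<eta> \<Omega> \<phi> = integral \<Omega> (\<lambda>x. (1/2) * (norm (grad \<phi> x))^2 + Fpot \<eta> (\<phi> x))"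

definition Jscheme_step :: "real \<Rightarrow> real \<Rightarrow> 'a::euclidean_space elem set \<Rightarrow> 'a set \<Rightarrow> real
    \<Rightarrow> ('a \<Rightarrow> real) \<Rightarrow> ('a \<Rightarrow> real) \<Rightarrow> ('a \<Rightarrow> real) \<Rightarrow> bool" where
  "Jscheme_step \<eta> \<epsilon> \<T> \<Omega> dt \<phi>old \<phi>new \<mu>new \<longleftrightarrow>
     P1 \<T> \<phi>new \<and> P1 \<T> \<mu>new
     \<and> (\<forall>\<mu>b. P1 \<T> \<mu>b \<longrightarrow>
          (1 / dt) * lumped \<T> \<Omega> (\<lambda>x. \<phi>new x - \<phi>old x) \<mu>b + mob_form \<epsilon> \<T> \<phi>new \<mu>new \<mu>b = 0)
     \<and> (\<forall>\<phi>b. P1 \<T> \<phi>b \<longrightarrow>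
          integral \<Omega> (\<lambda>x. grad \<phi>new x \<bullet> grad \<phi>b x)
          + integral \<Omega> (\<lambda>x. (deriv (Fc \<eta>) (\<phi>new x) + deriv (Fe \<eta>) (\<phi>old x)) * \<phi>b x)
          = lumped \<T> \<Omega> \<mu>new \<phi>b)"

end

theory Submission
  imports Defs
begin

text \<open>Test the first equation of the scheme with \<open>\<nu> = I\<^sub>h J\<^sub>\<epsilon>'(\<phi>\<^sup>n\<^sup>+\<^sup>1)\<close>. Convexity of
  \<open>J\<^sub>\<epsilon>\<close> at the nodes bounds the increment of \<open>\<integral>I\<^sub>h J\<^sub>\<epsilon>(\<phi>)\<close> by
  \<open>-\<Delta>t (M\<^sup>J\<^sub>\<epsilon> \<nabla>\<mu>, \<nabla>\<nu>)\<close>. On every element the mobility is the squared ratio of the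
  difference quotients of \<open>\<phi>\<close> and of \<open>J\<^sub>\<epsilon>'(\<phi>)\<close>, so Young's inequality gives
  \<open>-(M\<^sup>J\<^sub>\<epsilon> \<nabla>\<mu>, \<nabla>\<nu>) \<le> (M\<^sup>J\<^sub>\<epsilon> \<nabla>\<mu>, \<nabla>\<mu>) + \<parallel>\<nabla>\<phi>\<parallel>\<^sup>2\<close>.

  For the bound in time, test the two equations with \<open>\<mu>\<^sup>n\<^sup>+\<^sup>1\<close> and \<open>\<phi>\<^sup>n\<^sup>+\<^sup>1 - \<phi>\<^sup>n\<close>; the
  convex--concave splitting of \<open>F\<close> yields \<open>E(\<phi>\<^sup>n\<^sup>+\<^sup>1) + \<Delta>t (M\<^sup>J\<^sub>\<epsilon> \<nabla>\<mu>, \<nabla>\<mu>) \<le> E(\<phi>\<^sup>n)\<close>.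
  Adding both estimates cancels the mobility terms, and \<open>\<parallel>\<nabla>\<phi>\<^sup>n\<^sup>+\<^sup>1\<parallel>\<^sup>2 \<le> 2 E(\<phi>\<^sup>0)\<close>, so
  summing over the steps gives the bound with \<open>C\<^sub>1 = \<integral>I\<^sub>h J\<^sub>\<epsilon>(\<phi>\<^sup>0) + E(\<phi>\<^sup>0)\<close> and
  \<open>C\<^sub>2 = 2 E(\<phi>\<^sup>0)\<close>.\<close>

section \<open>The regularized function \<open>J\<^sub>\<epsilon>\<close>\<close>

definition Jfun' :: "real \<Rightarrow> real" where
  "Jfun' p = 2 * arcsin (sqrt (1/2)) - 2 * arcsin (sqrt (1 - p))"

definition Jfun'' :: "real \<Rightarrow> real" where
  "Jfun'' p = 1 / (sqrt p * sqrt (1 - p))"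

lemma has_real_derivative_arcsin_sqrt_one_minus:
  assumes "0 < p" "p < 1"
  shows "((\<lambda>p. arcsin (sqrt (1 - p))) has_real_derivative - 1 / (2 * sqrt p * sqrt (1 - p))) (at p)"
proof -
  have sqrt_bounds: "-1 < sqrt (1 - p)" "sqrt (1 - p) < 1"
    using assms by (auto intro: less_le_trans[of _ 0])
  have "((\<lambda>p. sqrt (1 - p)) has_real_derivative inverse (sqrt (1 - p)) / 2 * (0 - 1)) (at p)"
    using assms by (intro DERIV_chain2[OF DERIV_real_sqrt] derivative_intros) auto
  from DERIV_chain2[OF DERIV_arcsin[OF sqrt_bounds] this] show ?thesis
    using assms by (simp add: field_simps)
qed

lemma has_real_derivative_Jfun:
  assumes "0 < p" "p < 1"
  shows "(Jfun has_real_derivative Jfun' p) (at p)"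
proof -
  have "((\<lambda>p. (1 - p) * p) has_real_derivative 1 - 2 * p) (at p)"
    by (auto intro!: derivative_eq_intros)
  from DERIV_chain2[OF DERIV_real_sqrt this] assms
  have sqrt_deriv: "((\<lambda>p. sqrt ((1 - p) * p)) has_real_derivative (1 - 2 * p) / (2 * sqrt p * sqrt (1 - p))) (at p)"
    by (simp only: real_sqrt_mult) (simp add: field_simps)
  have linear_deriv: "((\<lambda>p. 1 - 2 * p) has_real_derivative - 2) (at p)"
    by (auto intro!: derivative_eq_intros)
  have prod_deriv: "((\<lambda>x. (1 - 2 * x) * arcsin (sqrt (1 - x))) has_real_derivative
      - 2 * arcsin (sqrt (1 - p)) + (1 - 2 * p) * (- 1 / (2 * sqrt p * sqrt (1 - p)))) (at p)"
    using DERIV_mult[OF linear_deriv has_real_derivative_arcsin_sqrt_one_minus[OF assms]] by simp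
  have "(Jfun has_real_derivative
      - 2 * arcsin (sqrt (1 - p)) + (1 - 2 * p) * (- 1 / (2 * sqrt p * sqrt (1 - p)))
      + (1 - 2 * p) / (2 * sqrt p * sqrt (1 - p)) + 2 * arcsin (sqrt (1/2)) * 1) (at p)"
    unfolding Jfun_def[abs_def]
    by (intro DERIV_add prod_deriv sqrt_deriv DERIV_cmult DERIV_ident)
  then show ?thesis
    by (simp add: Jfun'_def)
qed

lemma has_real_derivative_Jfun':
  assumes "0 < p" "p < 1"
  shows "(Jfun' has_real_derivative Jfun'' p) (at p)"
  using DERIV_diff[OF DERIV_const DERIV_cmult[OF has_real_derivative_arcsin_sqrt_one_minus[OF assms], of 2],
      of "2 * arcsin (sqrt (1/2))"]
  unfolding Jfun'_def[abs_def] Jfun''_def by simp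

lemma deriv_Jfun: "0 < p \<Longrightarrow> p < 1 \<Longrightarrow> deriv Jfun p = Jfun' p"
  by (rule DERIV_imp_deriv[OF has_real_derivative_Jfun])

lemma deriv_deriv_Jfun:
  assumes "0 < p" "p < 1"
  shows "deriv (deriv Jfun) p = Jfun'' p"
proof (rule DERIV_imp_deriv)
  show "(deriv Jfun has_real_derivative Jfun'' p) (at p)"
    by (rule has_field_derivative_transform_within_open[OF has_real_derivative_Jfun', of _ "{0<..<1}"])
       (use assms deriv_Jfun in auto)
qed

lemma Jfun''_pos: "0 < p \<Longrightarrow> p < 1 \<Longrightarrow> 0 < Jfun'' p"
  by (simp add: Jfun''_def)

lemma Jfun'_mono: "0 < p \<Longrightarrow> p \<le> q \<Longrightarrow> q < 1 \<Longrightarrow> Jfun' p \<le> Jfun' q"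
  by (simp add: Jfun'_def arcsin_le_mono)

lemma Jeps_altdef:
  assumes "0 < \<epsilon>" "\<epsilon> < 1/2"
  shows "Jeps \<epsilon> p =
    (if p < \<epsilon> then Jfun \<epsilon> + Jfun' \<epsilon> * (p - \<epsilon>) + Jfun'' \<epsilon> / 2 * (p - \<epsilon>)^2
     else if p > 1 - \<epsilon> then Jfun (1 - \<epsilon>) + Jfun' (1 - \<epsilon>) * (p - (1 - \<epsilon>))
       + Jfun'' (1 - \<epsilon>) / 2 * (p - (1 - \<epsilon>))^2
     else Jfun p)"
  using assms by (simp add: Jeps_def deriv_Jfun deriv_deriv_Jfun)

text \<open>Written with clamping so that monotonicity holds term by term.\<close>
definition Jeps' :: "real \<Rightarrow> real \<Rightarrow> real" where
  "Jeps' \<epsilon> p = Jfun' (max \<epsilon> (min p (1 - \<epsilon>)))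
     + Jfun'' \<epsilon> * min (p - \<epsilon>) 0 + Jfun'' (1 - \<epsilon>) * max (p - (1 - \<epsilon>)) 0"

lemma has_real_derivative_glue:
  fixes f g h :: "real \<Rightarrow> real"
  assumes "(g has_real_derivative D) (at c)" "(h has_real_derivative D) (at c)" "0 < d"
    and "\<And>x. c - d < x \<Longrightarrow> x \<le> c \<Longrightarrow> f x = g x" "\<And>x. c \<le> x \<Longrightarrow> x < c + d \<Longrightarrow> f x = h x"
  shows "(f has_real_derivative D) (at c)"
proof -
  have "(f has_real_derivative D) (at c within {..c})"
    by (rule has_field_derivative_transform_within[OF has_field_derivative_at_within[OF assms(1)] assms(3)])
      (use assms(4,5) in \<open>auto simp: dist_real_def\<close>)
  moreover have "(f has_real_derivative D) (at c within {c..})"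
    by (rule has_field_derivative_transform_within[OF has_field_derivative_at_within[OF assms(2)] assms(3)])
      (use assms(4,5) in \<open>auto simp: dist_real_def\<close>)
  ultimately show ?thesis
    unfolding has_field_derivative_iff by (rule Lim_Un_univ) auto
qed

lemma has_real_derivative_Jeps:
  assumes \<epsilon>: "0 < \<epsilon>" "\<epsilon> < 1/2"
  shows "(Jeps \<epsilon> has_real_derivative Jeps' \<epsilon> p) (at p)"
proof -
  define Q1 where "Q1 p = Jfun \<epsilon> + Jfun' \<epsilon> * (p - \<epsilon>) + Jfun'' \<epsilon> / 2 * (p - \<epsilon>)^2" for p
  define Q2 where "Q2 p = Jfun (1 - \<epsilon>) + Jfun' (1 - \<epsilon>) * (p - (1 - \<epsilon>))
    + Jfun'' (1 - \<epsilon>) / 2 * (p - (1 - \<epsilon>))^2" for p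
  have Jeps: "Jeps \<epsilon> p = (if p < \<epsilon> then Q1 p else if p > 1 - \<epsilon> then Q2 p else Jfun p)" for p
    unfolding Q1_def Q2_def by (rule Jeps_altdef[OF \<epsilon>])
  have Q1: "(Q1 has_real_derivative Jeps' \<epsilon> x) (at x)" if "x \<le> \<epsilon>" for x
    unfolding Q1_def using that \<epsilon> by (auto intro!: derivative_eq_intros simp: Jeps'_def)
  have Q2: "(Q2 has_real_derivative Jeps' \<epsilon> x) (at x)" if "1 - \<epsilon> \<le> x" for x
    unfolding Q2_def using that \<epsilon> by (auto intro!: derivative_eq_intros simp: Jeps'_def)
  have J: "(Jfun has_real_derivative Jeps' \<epsilon> x) (at x)" if "\<epsilon> \<le> x" "x \<le> 1 - \<epsilon>" for x
    using has_real_derivative_Jfun[of x] that \<epsilon> by (simp add: Jeps'_def)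
  consider "p < \<epsilon>" | "p = \<epsilon>" | "\<epsilon> < p" "p < 1 - \<epsilon>" | "p = 1 - \<epsilon>" | "1 - \<epsilon> < p"
    by linarith
  then show ?thesis
  proof cases
    case 1
    then show ?thesis
      by (intro has_field_derivative_transform_within_open[OF Q1, where S = "{..<\<epsilon>}"])
        (auto simp: Jeps)
  next
    case 2
    show ?thesis
      by (rule has_real_derivative_glue[OF Q1 J, where d = "1 - 2 * \<epsilon>"])
        (use 2 \<epsilon> in \<open>auto simp: Jeps Q1_def\<close>)
  next
    case 3
    then show ?thesis
      by (intro has_field_derivative_transform_within_open[OF J, where S = "{\<epsilon><..<1 - \<epsilon>}"])
        (auto simp: Jeps)
  next
    case 4
    show ?thesis
      by (rule has_real_derivative_glue[OF J Q2, where d = "1 - 2 * \<epsilon>"])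
        (use 4 \<epsilon> in \<open>auto simp: Jeps Q2_def\<close>)
  next
    case 5
    then show ?thesis
      using \<epsilon> by (intro has_field_derivative_transform_within_open[OF Q2, where S = "{1 - \<epsilon><..}"])
        (auto simp: Jeps)
  qed
qed

lemma mono_Jeps':
  assumes "0 < \<epsilon>" "\<epsilon> < 1/2"
  shows "mono (Jeps' \<epsilon>)"
proof
  fix p q :: real
  assume "p \<le> q"
  moreover have "0 < Jfun'' \<epsilon>" "0 < Jfun'' (1 - \<epsilon>)"
    using assms by (auto intro: Jfun''_pos)
  ultimately show "Jeps' \<epsilon> p \<le> Jeps' \<epsilon> q"
    unfolding Jeps'_def using assms
    by (intro add_mono mult_left_mono Jfun'_mono) auto
qed

lemma deriv_Jeps: "0 < \<epsilon> \<Longrightarrow> \<epsilon> < 1/2 \<Longrightarrow> deriv (Jeps \<epsilon>) p = Jeps' \<epsilon> p"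
  by (rule DERIV_imp_deriv[OF has_real_derivative_Jeps])

lemma Jeps_diff_le:
  assumes "0 < \<epsilon>" "\<epsilon> < 1/2"
  shows "Jeps \<epsilon> a - Jeps \<epsilon> b \<le> (a - b) * deriv (Jeps \<epsilon>) a"
proof -
  have "convex_on UNIV (Jeps \<epsilon>)"
    using has_real_derivative_Jeps[OF assms] mono_Jeps'[OF assms]
    by (intro convex_on_realI[where f' = "Jeps' \<epsilon>"]) (auto simp: mono_def)
  from convex_on_imp_above_tangent[OF this, of a b "Jeps' \<epsilon> a"] has_real_derivative_Jeps[OF assms]
  have "Jeps' \<epsilon> a * (b - a) \<le> Jeps \<epsilon> b - Jeps \<epsilon> a"
    by simp
  then show ?thesis
    by (simp add: deriv_Jeps[OF assms] algebra_simps)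
qed

lemma deriv_Fc: "deriv (Fc \<eta>) p = 1 / (4 * \<eta>^2) * (4 * p^3 - 6 * p^2 + 3 * p)"
proof (rule DERIV_imp_deriv)
  show "(Fc \<eta> has_real_derivative 1 / (4 * \<eta>^2) * (4 * p^3 - 6 * p^2 + 3 * p)) (at p)"
    unfolding Fc_def[abs_def] by (intro DERIV_cmult) (auto intro!: derivative_eq_intros)
qed

lemma deriv_Fe: "deriv (Fe \<eta>) p = - (1 / (4 * \<eta>^2)) * p"
proof (rule DERIV_imp_deriv)
  show "(Fe \<eta> has_real_derivative - (1 / (4 * \<eta>^2)) * p) (at p)"
    using DERIV_cmult[OF DERIV_pow[of 2 p], of "- (1 / (8 * \<eta>^2))"]
    unfolding Fe_def[abs_def] by simp
qed

text \<open>Convex--concave splitting: the defect of the inequality is a sum of squares.\<close>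
lemma Fpot_diff_le: "Fpot \<eta> a - Fpot \<eta> b \<le> (deriv (Fc \<eta>) a + deriv (Fe \<eta>) b) * (a - b)"
proof -
  define k where "k = 1 / (4 * \<eta>^2)"
  have "(k * (4 * a^3 - 6 * a^2 + 3 * a) + - k * b) * (a - b) - (k * a^2 * (a - 1)^2 - k * b^2 * (b - 1)^2)
      = k * ((b - a)^2 * ((a + b - 1)^2 + 2 * (a - 1/2)^2) + (a - b)^2 / 2)"
    by (simp add: field_simps power2_eq_square power3_eq_cube power4_eq_xxxx)
  moreover have "0 \<le> k * ((b - a)^2 * ((a + b - 1)^2 + 2 * (a - 1/2)^2) + (a - b)^2 / 2)"
    by (simp add: k_def)
  ultimately show ?thesis
    unfolding deriv_Fc deriv_Fe Fpot_def k_def[symmetric] by linarith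
qed

lemma half_norm_sq_diff_le:
  fixes a b :: "'a::real_inner"
  shows "(1/2) * (norm a)^2 - (1/2) * (norm b)^2 \<le> a \<bullet> (a - b)"
proof -
  have "a \<bullet> (a - b) - ((1/2) * (norm a)^2 - (1/2) * (norm b)^2) = (1/2) * (norm (a - b))^2"
    by (simp add: power2_norm_eq_inner inner_diff_left inner_diff_right inner_commute field_simps)
  moreover have "0 \<le> (1/2) * (norm (a - b))^2"
    by simp
  ultimately show ?thesis
    by linarith
qed

lemma norm_sq_eq_sum_Basis: "(norm v)^2 = (\<Sum>b\<in>Basis. (v \<bullet> b)^2)"
  unfolding power2_norm_eq_inner by (simp add: euclidean_inner[of v v] power2_eq_square)

lemma neg_weighted_mult_le:
  fixes m s t q :: real
  assumes "0 \<le> m" "m * t^2 \<le> q"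
  shows "- (m * s * t) \<le> m * s^2 + q"
proof -
  have "0 \<le> m * ((s + t / 2)^2 + 3 / 4 * t^2)"
    using assms(1) by simp
  then show ?thesis
    using assms(2) by (simp add: power2_eq_square algebra_simps)
qed

lemma vtx_minus_fst: "vtx I b - fst I = (snd I \<bullet> b) *\<^sub>R b"
  by (simp add: vtx_def)

lemma finite_verts: "finite (verts I)"
  by (simp add: verts_def)

lemma verts_subset_cell: "verts I \<subseteq> cell I"
  unfolding cell_def by (rule hull_subset)

lemma fst_in_cell: "fst I \<in> cell I"
  using verts_subset_cell[of I] by (auto simp: verts_def)

lemma vtx_in_cell: "b \<in> Basis \<Longrightarrow> vtx I b \<in> cell I"
  using verts_subset_cell[of I] by (auto simp: verts_def)

lemma convex_cell: "convex (cell I)"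
  by (simp add: cell_def)

lemma compact_cell: "compact (cell I)"
  by (simp add: cell_def compact_convex_hull finite_verts finite_imp_compact)

lemma frontier_cell: "frontier (cell I) = cell I - interior (cell I)"
  using compact_cell[of I] by (simp add: frontier_def compact_imp_closed closure_closed)

lemma struct_triang_nondegenerate: "struct_triang T \<Longrightarrow> I \<in> T \<Longrightarrow> b \<in> Basis \<Longrightarrow> snd I \<bullet> b \<noteq> 0"
  unfolding struct_triang_def by blast

definition cell_grad :: "'a::euclidean_space elem \<Rightarrow> ('a \<Rightarrow> real) \<Rightarrow> 'a" where
  "cell_grad I g = (\<Sum>b\<in>Basis. ((g (vtx I b) - g (fst I)) / (snd I \<bullet> b)) *\<^sub>R b)"

lemma inner_cell_grad: "b \<in> Basis \<Longrightarrow> cell_grad I g \<bullet> b = (g (vtx I b) - g (fst I)) / (snd I \<bullet> b)"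
  by (simp add: cell_grad_def inner_sum_left_Basis)

lemma cell_grad_diff: "cell_grad I (\<lambda>x. f x - g x) = cell_grad I f - cell_grad I g"
  by (simp add: cell_grad_def diff_divide_distrib scaleR_diff_left sum_subtractf)

lemma interp_cell_eq: "interp_cell I g x = g (fst I) + cell_grad I g \<bullet> (x - fst I)"
  unfolding interp_cell_def cell_grad_def inner_sum_left
  by (simp add: inner_commute mult.commute)

lemma interp_cell_vertex:
  assumes "\<forall>b\<in>Basis. snd I \<bullet> b \<noteq> 0" "v \<in> verts I"
  shows "interp_cell I g v = g v"
  using assms by (auto simp: verts_def interp_cell_eq vtx_minus_fst inner_cell_grad)

lemma affine_nonneg_on_convex_hull:
  fixes c :: "'a::real_inner"
  assumes "\<forall>v\<in>S. 0 \<le> c \<bullet> v + d" "x \<in> convex hull S"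
  shows "0 \<le> c \<bullet> x + d"
proof -
  have "convex hull S \<subseteq> {x. - d \<le> c \<bullet> x}"
    using assms(1) by (intro hull_minimal convex_halfspace_ge) auto
  then show ?thesis
    using assms(2) by auto
qed

lemma affine_eq_on_convex_hull:
  fixes c c' :: "'a::real_inner"
  assumes "\<forall>v\<in>S. c \<bullet> v + d = c' \<bullet> v + d'" "x \<in> convex hull S"
  shows "c \<bullet> x + d = c' \<bullet> x + d'"
proof -
  have "\<forall>v\<in>S. 0 \<le> (c - c') \<bullet> v + (d - d')" "\<forall>v\<in>S. 0 \<le> (c' - c) \<bullet> v + (d' - d)"
    using assms(1) by (auto simp: inner_diff_left)
  with affine_nonneg_on_convex_hull[OF _ assms(2)] show ?thesis
    by (smt (verit) inner_diff_left)
qed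

lemma interp_cell_affine: "interp_cell I g x = cell_grad I g \<bullet> x + (g (fst I) - cell_grad I g \<bullet> fst I)"
  by (simp add: interp_cell_eq inner_diff_right)

lemma interp_cell_nonneg:
  assumes "\<forall>b\<in>Basis. snd I \<bullet> b \<noteq> 0" "\<forall>v\<in>verts I. 0 \<le> g v" "x \<in> cell I"
  shows "0 \<le> interp_cell I g x"
proof -
  have "\<forall>v\<in>verts I. 0 \<le> cell_grad I g \<bullet> v + (g (fst I) - cell_grad I g \<bullet> fst I)"
    using assms(1,2) by (simp add: interp_cell_affine[symmetric] interp_cell_vertex)
  from affine_nonneg_on_convex_hull[OF this] assms(3) show ?thesis
    by (simp add: cell_def interp_cell_affine)
qed

lemma Ih_eq_interp_cell:
  assumes T: "struct_triang T" and I: "I \<in> T" and x: "x \<in> cell I"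
  shows "Ih T g x = interp_cell I g x"
proof -
  define I' where "I' = (SOME I. I \<in> T \<and> x \<in> cell I)"
  have I': "I' \<in> T" "x \<in> cell I'"
    using someI[of "\<lambda>I. I \<in> T \<and> x \<in> cell I"] I x unfolding I'_def by blast+
  have "interp_cell I' g x = interp_cell I g x"
  proof (cases "I' = I")
    case False
    then have "x \<in> convex hull (verts I' \<inter> verts I)"
      using T I I' x unfolding struct_triang_def by blast
    moreover have "\<forall>v \<in> verts I' \<inter> verts I. interp_cell I' g v = interp_cell I g v"
      using struct_triang_nondegenerate[OF T] I I' by (simp add: interp_cell_vertex)
    ultimately show ?thesis
      unfolding interp_cell_affine by (rule affine_eq_on_convex_hull[rotated])
  qed simp
  then show ?thesis
    unfolding Ih_def I'_def using I x by auto
qed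

lemma Ih_vertex: "struct_triang T \<Longrightarrow> I \<in> T \<Longrightarrow> v \<in> verts I \<Longrightarrow> Ih T g v = g v"
  using verts_subset_cell[of I]
  by (auto simp: Ih_eq_interp_cell interp_cell_vertex struct_triang_nondegenerate)

lemma Ih_nonneg:
  assumes "struct_triang T" "\<And>I v. I \<in> T \<Longrightarrow> v \<in> verts I \<Longrightarrow> 0 \<le> g v"
  shows "0 \<le> Ih T g x"
proof (cases "\<exists>I\<in>T. x \<in> cell I")
  case True
  then obtain I where "I \<in> T" "x \<in> cell I"
    by blast
  then show ?thesis
    using assms struct_triang_nondegenerate[OF assms(1)]
    by (simp add: Ih_eq_interp_cell interp_cell_nonneg)
qed (simp add: Ih_def)

lemma Ih_diff: "Ih T (\<lambda>x. f x - g x) x = Ih T f x - Ih T g x"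
  by (simp add: Ih_def interp_cell_eq cell_grad_diff inner_diff_left)

section \<open>Integration over the mesh\<close>

abbreviation mesh_domain :: "'a::euclidean_space elem set \<Rightarrow> 'a set" where
  "mesh_domain T \<equiv> interior (\<Union>(cell ` T))"

lemma negligible_convex_hull_card_le:
  fixes S :: "'a::euclidean_space set"
  assumes "finite S" "card S \<le> DIM('a)"
  shows "negligible (convex hull S)"
proof -
  have "closed (convex hull S)"
    using assms(1) by (simp add: compact_convex_hull compact_imp_closed finite_imp_compact)
  with empty_interior_convex_hull[OF assms] have "frontier (convex hull S) = convex hull S"
    by (simp add: frontier_def)
  then show ?thesis
    using negligible_convex_frontier[of "convex hull S"] by simp
qed

lemma card_verts:
  fixes I :: "'a::euclidean_space elem"
  assumes nondeg: "\<forall>b\<in>Basis. snd I \<bullet> b \<noteq> 0"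
  shows "card (verts I) = Suc DIM('a)"
proof -
  have vtx_inner: "(vtx I b - fst I) \<bullet> b' = (if b = b' then snd I \<bullet> b else 0)"
    if "b \<in> Basis" "b' \<in> Basis" for b b'
    using that by (simp add: vtx_minus_fst inner_Basis)
  have "inj_on (vtx I) Basis"
  proof (rule inj_onI)
    fix b b'
    assume b: "b \<in> Basis" "b' \<in> Basis" "vtx I b = vtx I b'"
    then have "(vtx I b' - fst I) \<bullet> b = snd I \<bullet> b"
      using vtx_inner[of b b] by simp
    then show "b = b'"
      using vtx_inner[OF b(2) b(1)] nondeg b(1) by (cases "b' = b") simp_all
  qed
  moreover have "fst I \<notin> vtx I ` Basis"
  proof
    assume "fst I \<in> vtx I ` Basis"
    then obtain b where "b \<in> Basis" "vtx I b = fst I"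
      by auto
    then show False
      using vtx_inner[of b b] nondeg by simp
  qed
  ultimately show ?thesis
    by (simp add: verts_def card_image)
qed

lemma negligible_cell_Int:
  fixes T :: "'a::euclidean_space elem set"
  assumes T: "struct_triang T" and I: "I \<in> T" "I' \<in> T" "I \<noteq> I'"
  shows "negligible (cell I \<inter> cell I')"
proof -
  have card: "card (verts I) = Suc DIM('a)" "card (verts I') = Suc DIM('a)"
    using card_verts struct_triang_nondegenerate[OF T] I by blast+
  have "card (verts I \<inter> verts I') \<le> DIM('a)"
  proof (rule ccontr)
    assume "\<not> card (verts I \<inter> verts I') \<le> DIM('a)"
    moreover have "card (verts I \<inter> verts I') \<le> card (verts I)" "card (verts I \<inter> verts I') \<le> card (verts I')"
      by (simp_all add: card_mono finite_verts)
    ultimately have "verts I \<inter> verts I' = verts I" "verts I \<inter> verts I' = verts I'"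
      using card card_subset_eq[OF finite_verts[of I] Int_lower1]
        card_subset_eq[OF finite_verts[of I'] Int_lower2] by simp_all
    then have "cell I = cell I'"
      unfolding cell_def by simp
    then show False
      using T I unfolding struct_triang_def inj_on_def by blast
  qed
  moreover have "cell I \<inter> cell I' = convex hull (verts I \<inter> verts I')"
    using T I unfolding struct_triang_def by blast
  ultimately show ?thesis
    by (simp add: negligible_convex_hull_card_le finite_verts)
qed

definition skeleton :: "'a::euclidean_space elem set \<Rightarrow> 'a set" where
  "skeleton T = (\<Union>I\<in>T. frontier (cell I))"

lemma negligible_skeleton: "struct_triang T \<Longrightarrow> negligible (skeleton T)"
  unfolding skeleton_def struct_triang_def
  by (intro negligible_Union) (auto intro: negligible_convex_frontier convex_cell)

lemma mesh_boundary_subset_skeleton: "\<Union>(cell ` T) - mesh_domain T \<subseteq> skeleton T"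
proof
  fix x
  assume x: "x \<in> \<Union>(cell ` T) - mesh_domain T"
  then obtain I where I: "I \<in> T" "x \<in> cell I"
    by auto
  have "interior (cell I) \<subseteq> mesh_domain T"
    using I by (intro interior_mono) auto
  then show "x \<in> skeleton T"
    using x I unfolding skeleton_def frontier_cell by auto
qed

lemma in_interior_cell_if_not_skeleton:
  assumes "x \<in> mesh_domain T" "x \<notin> skeleton T"
  obtains I where "I \<in> T" "x \<in> interior (cell I)"
proof -
  obtain I where "I \<in> T" "x \<in> cell I"
    using assms(1) interior_subset by blast
  with assms(2) that show thesis
    unfolding skeleton_def frontier_cell by blast
qed

lemma has_integral_mesh:
  fixes F :: "'a::euclidean_space \<Rightarrow> real"
  assumes T: "struct_triang T" and F: "\<And>I. I \<in> T \<Longrightarrow> F integrable_on cell I"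
  shows "(F has_integral (\<Sum>I\<in>T. integral (cell I) F)) (mesh_domain T)"
proof -
  have "finite T" "inj_on cell T"
    using T unfolding struct_triang_def by auto
  have "(F has_integral (\<Sum>S\<in>cell ` T. integral S F)) (\<Union>(cell ` T))"
  proof (rule has_integral_Union)
    show "pairwise (\<lambda>S S'. negligible (S \<inter> S')) (cell ` T)"
      unfolding pairwise_def using negligible_cell_Int[OF T] by blast
  qed (use F \<open>finite T\<close> in auto)
  then have "(F has_integral (\<Sum>I\<in>T. integral (cell I) F)) (\<Union>(cell ` T))"
    by (simp add: sum.reindex[OF \<open>inj_on cell T\<close>])
  moreover have "negligible {x \<in> \<Union>(cell ` T) - mesh_domain T. F x \<noteq> 0}"
    by (rule negligible_subset[OF negligible_skeleton[OF T]]) (use mesh_boundary_subset_skeleton in blast)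
  moreover have "negligible {x \<in> mesh_domain T - \<Union>(cell ` T). F x \<noteq> 0}"
    by (rule negligible_subset[OF negligible_empty]) (use interior_subset in blast)
  ultimately show ?thesis
    using has_integral_spike_set_eq by blast
qed

lemma integral_mesh:
  fixes F :: "'a::euclidean_space \<Rightarrow> real"
  assumes "struct_triang T" "\<And>I. I \<in> T \<Longrightarrow> F integrable_on cell I"
  shows "integral (mesh_domain T) F = (\<Sum>I\<in>T. integral (cell I) F)"
  using has_integral_mesh[OF assms] by (rule integral_unique)

lemma integrable_on_cell:
  fixes F G :: "'a::euclidean_space \<Rightarrow> real"
  assumes "continuous_on (cell I) G" "\<And>x. x \<in> interior (cell I) \<Longrightarrow> F x = G x"
  shows "F integrable_on cell I"
proof (rule integrable_spike[OF _ negligible_convex_frontier[OF convex_cell[of I]]])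
  show "G integrable_on cell I"
    using borel_integrable_compact[OF compact_cell assms(1)] set_borel_integral_eq_integral(1)
    unfolding set_integrable_def by blast
qed (use assms(2) in \<open>auto simp: frontier_cell\<close>)

lemma integrable_on_mesh:
  fixes F :: "'a::euclidean_space \<Rightarrow> real"
  assumes "struct_triang T" "\<And>I. I \<in> T \<Longrightarrow> continuous_on (cell I) (G I)"
    and "\<And>I x. I \<in> T \<Longrightarrow> x \<in> interior (cell I) \<Longrightarrow> F x = G I x"
  shows "F integrable_on mesh_domain T"
  using has_integral_mesh[OF assms(1) integrable_on_cell[OF assms(2,3)]] by blast

lemma integrable_on_mesh_continuous:
  fixes F :: "'a::euclidean_space \<Rightarrow> real"
  assumes "struct_triang T" "continuous_on (\<Union>(cell ` T)) F"
  shows "F integrable_on mesh_domain T"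
  using assms by (intro integrable_on_mesh[where G = "\<lambda>I. F"] continuous_on_subset[OF assms(2)]) auto

lemma integral_le_off_negligible:
  fixes F G :: "'a::euclidean_space \<Rightarrow> real"
  assumes N: "negligible N" and "F integrable_on S" "G integrable_on S"
    and le: "\<And>x. x \<in> S - N \<Longrightarrow> F x \<le> G x"
  shows "integral S F \<le> integral S G"
proof -
  define F' where "F' x = (if x \<in> N then 0 else F x)" for x
  define G' where "G' x = (if x \<in> N then 0 else G x)" for x
  have "F' integrable_on S"
    by (rule integrable_spike[OF assms(2) N]) (simp add: F'_def)
  moreover have "G' integrable_on S"
    by (rule integrable_spike[OF assms(3) N]) (simp add: G'_def)
  ultimately have "integral S F' \<le> integral S G'"
    by (rule integral_le) (use le in \<open>simp add: F'_def G'_def\<close>)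
  moreover have "integral S F = integral S F'"
    by (rule integral_spike[OF N]) (simp add: F'_def)
  moreover have "integral S G = integral S G'"
    by (rule integral_spike[OF N]) (simp add: G'_def)
  ultimately show ?thesis
    by simp
qed

lemma integral_cell_mono:
  fixes F G :: "'a::euclidean_space \<Rightarrow> real"
  assumes "F integrable_on cell I" "G integrable_on cell I" "\<And>x. x \<in> interior (cell I) \<Longrightarrow> F x \<le> G x"
  shows "integral (cell I) F \<le> integral (cell I) G"
  using assms by (intro integral_le_off_negligible[OF negligible_convex_frontier[OF convex_cell]])
    (auto simp: frontier_cell)

lemma grad_eqI:
  assumes "GDERIV f x :> D"
  shows "grad f x = D"
  unfolding grad_def
proof (rule some_equality)
  fix D'
  assume "GDERIV f x :> D'"
  then have "(\<lambda>h. h \<bullet> D') = (\<lambda>h. h \<bullet> D)"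
    using assms
    unfolding gderiv_def by (rule has_derivative_unique)
  then have "(D' - D) \<bullet> D' = (D' - D) \<bullet> D"
    by meson
  then have "(D' - D) \<bullet> (D' - D) = 0"
    by (simp add: inner_diff_right)
  then show "D' = D"
    by simp
qed (rule assms)

lemma continuous_on_cell_P1: "P1 T f \<Longrightarrow> I \<in> T \<Longrightarrow> continuous_on (cell I) f"
  unfolding P1_def by (rule continuous_on_subset) auto

lemma P1_gderiv:
  assumes T: "struct_triang T" and f: "P1 T f" and I: "I \<in> T" and x: "x \<in> interior (cell I)"
  shows "GDERIV f x :> cell_grad I f"
proof -
  obtain a c where ac: "\<And>y. y \<in> cell I \<Longrightarrow> f y = a \<bullet> y + c"
    using f I unfolding P1_def by blast
  have "((\<lambda>y. y \<bullet> a + c) has_derivative (\<lambda>h. h \<bullet> a)) (at x)"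
    by (auto intro!: derivative_eq_intros)
  then have "GDERIV f x :> a"
    unfolding gderiv_def
    by (rule has_derivative_transform_within_open[OF _ open_interior x])
      (use ac interior_subset in \<open>force simp: inner_commute\<close>)
  moreover have "cell_grad I f = a"
  proof (rule euclidean_eqI)
    fix b :: 'a
    assume b: "b \<in> Basis"
    have "f (vtx I b) - f (fst I) = (snd I \<bullet> b) * (a \<bullet> b)"
      using ac[OF vtx_in_cell[OF b]] ac[OF fst_in_cell] vtx_minus_fst[of I b]
      by (metis add_diff_cancel_right inner_diff_right inner_scaleR_right)
    then show "cell_grad I f \<bullet> b = a \<bullet> b"
      using struct_triang_nondegenerate[OF T I b] b by (simp add: inner_cell_grad)
  qed
  ultimately show ?thesis
    by simp
qed

lemma grad_P1:
  "struct_triang T \<Longrightarrow> P1 T f \<Longrightarrow> I \<in> T \<Longrightarrow> x \<in> interior (cell I) \<Longrightarrow> grad f x = cell_grad I f"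
  by (rule grad_eqI[OF P1_gderiv])

lemma P1_diff:
  assumes "P1 T f" "P1 T g"
  shows "P1 T (\<lambda>x. f x - g x)"
  unfolding P1_def
proof
  show "continuous_on (\<Union>(cell ` T)) (\<lambda>x. f x - g x)"
    using assms unfolding P1_def by (intro continuous_intros) auto
  show "\<forall>I\<in>T. \<exists>a c. \<forall>x\<in>cell I. f x - g x = a \<bullet> x + c"
  proof
    fix I
    assume "I \<in> T"
    then obtain a c a' c' where "\<forall>x\<in>cell I. f x = a \<bullet> x + c" "\<forall>x\<in>cell I. g x = a' \<bullet> x + c'"
      using assms unfolding P1_def by meson
    then have "\<forall>x\<in>cell I. f x - g x = (a - a') \<bullet> x + (c - c')"
      by (simp add: inner_diff_left)
    then show "\<exists>a c. \<forall>x\<in>cell I. f x - g x = a \<bullet> x + c"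
      by blast
  qed
qed

lemma P1_Ih:
  assumes T: "struct_triang T"
  shows "P1 T (Ih T g)"
  unfolding P1_def
proof
  have "finite T"
    using T by (simp add: struct_triang_def)
  then show "continuous_on (\<Union>(cell ` T)) (Ih T g)"
  proof (rule continuous_on_closed_Union)
    fix I
    assume "I \<in> T"
    then have "continuous_on (cell I) (interp_cell I g)"
      unfolding interp_cell_affine[abs_def] by (intro continuous_intros)
    then show "continuous_on (cell I) (Ih T g)"
      using Ih_eq_interp_cell[OF T \<open>I \<in> T\<close>] by (simp cong: continuous_on_cong)
  qed (simp add: compact_cell compact_imp_closed)
  show "\<forall>I\<in>T. \<exists>a c. \<forall>x\<in>cell I. Ih T g x = a \<bullet> x + c"
    using Ih_eq_interp_cell[OF T] interp_cell_affine by metis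
qed

lemma integrable_Ih:
  assumes T: "struct_triang T"
  shows "Ih T g integrable_on mesh_domain T"
proof (rule integrable_on_mesh[OF T, where G = "\<lambda>I. interp_cell I g"])
  show "continuous_on (cell I) (interp_cell I g)" for I
    unfolding interp_cell_affine[abs_def] by (intro continuous_intros)
  show "Ih T g x = interp_cell I g x" if "I \<in> T" "x \<in> interior (cell I)" for I x
    using Ih_eq_interp_cell[OF T] interior_subset that by blast
qed

lemma integrable_grad_sq_P1:
  "struct_triang T \<Longrightarrow> P1 T \<phi> \<Longrightarrow> (\<lambda>x. (norm (grad \<phi> x))^2) integrable_on mesh_domain T"
  by (intro integrable_on_mesh[where G = "\<lambda>I x. (norm (cell_grad I \<phi>))^2"])
    (simp_all add: grad_P1)

lemma integrable_energy_density_P1: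
  assumes T: "struct_triang T" and \<phi>: "P1 T \<phi>"
  shows "(\<lambda>x. (1/2) * (norm (grad \<phi> x))^2 + Fpot \<eta> (\<phi> x)) integrable_on mesh_domain T"
proof (rule integrable_on_mesh[OF T,
      where G = "\<lambda>I x. (1/2) * (norm (cell_grad I \<phi>))^2 + Fpot \<eta> (\<phi> x)"])
  show "continuous_on (cell I) (\<lambda>x. (1/2) * (norm (cell_grad I \<phi>))^2 + Fpot \<eta> (\<phi> x))"
    if "I \<in> T" for I
    using continuous_on_cell_P1[OF \<phi> that] unfolding Fpot_def by (intro continuous_intros)
qed (simp add: grad_P1[OF T \<phi>])

lemma grad_diff_P1:
  assumes "struct_triang T" "P1 T f" "P1 T g" "I \<in> T" "x \<in> interior (cell I)"
  shows "grad (\<lambda>x. f x - g x) x = grad f x - grad g x"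
  using assms by (simp add: grad_P1 P1_diff cell_grad_diff)

lemma integrable_grad_inner_P1:
  "struct_triang T \<Longrightarrow> P1 T f \<Longrightarrow> P1 T g \<Longrightarrow> (\<lambda>x. grad f x \<bullet> grad g x) integrable_on mesh_domain T"
  by (intro integrable_on_mesh[where G = "\<lambda>I x. cell_grad I f \<bullet> cell_grad I g"])
    (simp_all add: grad_P1)

lemma energy_nonneg: "0 \<le> energy \<eta> \<Omega> \<phi>"
  unfolding energy_def
  by (cases "(\<lambda>x. (1/2) * (norm (grad \<phi> x))^2 + Fpot \<eta> (\<phi> x)) integrable_on \<Omega>")
    (auto intro!: integral_nonneg simp: Fpot_def not_integrable_integral)

lemma integral_grad_sq_le_energy:
  assumes "struct_triang T" "P1 T \<phi>"
  shows "integral (mesh_domain T) (\<lambda>x. (norm (grad \<phi> x))^2) \<le> 2 * energy \<eta> (mesh_domain T) \<phi>"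
proof -
  have "integral (mesh_domain T) (\<lambda>x. (norm (grad \<phi> x))^2)
      \<le> integral (mesh_domain T) (\<lambda>x. 2 * ((1/2) * (norm (grad \<phi> x))^2 + Fpot \<eta> (\<phi> x)))"
    by (intro integral_le integrable_grad_sq_P1 integrable_on_cmult_left[where c = 2, simplified]
        integrable_energy_density_P1 assms) (simp add: Fpot_def)
  then show ?thesis
    unfolding energy_def integral_mult_right .
qed

lemma MJ_nonneg: "0 \<le> MJ \<epsilon> \<phi> I b"
  by (simp add: MJ_def)

lemma mob_form_nonneg: "0 \<le> mob_form \<epsilon> T \<phi> \<mu> \<mu>"
  unfolding mob_form_def
proof (intro sum_nonneg)
  fix I
  let ?f = "\<lambda>x. \<Sum>b\<in>Basis. MJ \<epsilon> \<phi> I b * (grad \<mu> x \<bullet> b) * (grad \<mu> x \<bullet> b)"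
  have "0 \<le> ?f x" for x
    by (intro sum_nonneg) (simp add: MJ_nonneg mult.assoc)
  then show "0 \<le> integral (cell I) ?f"
    by (cases "?f integrable_on cell I") (simp_all add: integral_nonneg not_integrable_integral)
qed

lemma MJ_mult_sq_le:
  "MJ \<epsilon> \<phi> I b * ((deriv (Jeps \<epsilon>) (\<phi> (vtx I b)) - deriv (Jeps \<epsilon>) (\<phi> (fst I))) / h)^2
     \<le> ((\<phi> (vtx I b) - \<phi> (fst I)) / h)^2"
  by (cases "deriv (Jeps \<epsilon>) (\<phi> (vtx I b)) = deriv (Jeps \<epsilon>) (\<phi> (fst I))")
    (auto simp: MJ_def power_divide)

lemma mobility_cross_le:
  assumes T: "struct_triang T" and I: "I \<in> T"
  shows "- (\<Sum>b\<in>Basis. MJ \<epsilon> \<phi> I b * (u \<bullet> b) * (cell_grad I (Ih T (\<lambda>x. deriv (Jeps \<epsilon>) (\<phi> x))) \<bullet> b))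
    \<le> (\<Sum>b\<in>Basis. MJ \<epsilon> \<phi> I b * (u \<bullet> b) * (u \<bullet> b)) + (\<Sum>b\<in>Basis. (cell_grad I \<phi> \<bullet> b)^2)"
proof -
  have "- (MJ \<epsilon> \<phi> I b * (u \<bullet> b) * (cell_grad I (Ih T (\<lambda>x. deriv (Jeps \<epsilon>) (\<phi> x))) \<bullet> b))
      \<le> MJ \<epsilon> \<phi> I b * (u \<bullet> b) * (u \<bullet> b) + (cell_grad I \<phi> \<bullet> b)^2"
    if b: "b \<in> Basis" for b
  proof -
    have \<nu>: "cell_grad I (Ih T (\<lambda>x. deriv (Jeps \<epsilon>) (\<phi> x))) \<bullet> b
        = (deriv (Jeps \<epsilon>) (\<phi> (vtx I b)) - deriv (Jeps \<epsilon>) (\<phi> (fst I))) / (snd I \<bullet> b)"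
      using b Ih_vertex[OF T I, of "vtx I b"] Ih_vertex[OF T I, of "fst I"]
      by (simp add: inner_cell_grad verts_def)
    have "MJ \<epsilon> \<phi> I b * (cell_grad I (Ih T (\<lambda>x. deriv (Jeps \<epsilon>) (\<phi> x))) \<bullet> b)^2
        \<le> (cell_grad I \<phi> \<bullet> b)^2"
      unfolding \<nu> unfolding inner_cell_grad[OF b] by (rule MJ_mult_sq_le)
    from neg_weighted_mult_le[OF MJ_nonneg this, of "u \<bullet> b"] show ?thesis
      by (simp add: power2_eq_square mult.assoc)
  qed
  then show ?thesis
    unfolding sum.distrib[symmetric] sum_negf[symmetric] by (rule sum_mono)
qed

lemma mob_form_Ih_deriv_Jeps_ge:
  assumes T: "struct_triang T" and \<phi>: "P1 T \<phi>" and \<mu>: "P1 T \<mu>"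
  shows "- mob_form \<epsilon> T \<phi> \<mu> (Ih T (\<lambda>x. deriv (Jeps \<epsilon>) (\<phi> x)))
    \<le> mob_form \<epsilon> T \<phi> \<mu> \<mu> + integral (mesh_domain T) (\<lambda>x. (norm (grad \<phi> x))^2)"
proof -
  define \<nu> where "\<nu> = Ih T (\<lambda>x. deriv (Jeps \<epsilon>) (\<phi> x))"
  have \<nu>P1: "P1 T \<nu>"
    unfolding \<nu>_def by (rule P1_Ih[OF T])
  define cross where "cross I x = (\<Sum>b\<in>Basis. MJ \<epsilon> \<phi> I b * (grad \<mu> x \<bullet> b) * (grad \<nu> x \<bullet> b))" for I x
  define diag where "diag I x = (\<Sum>b\<in>Basis. MJ \<epsilon> \<phi> I b * (grad \<mu> x \<bullet> b) * (grad \<mu> x \<bullet> b))" for I x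
  define gsq where "gsq x = (norm (grad \<phi> x))^2" for x
  have integrable: "cross I integrable_on cell I" "diag I integrable_on cell I" "gsq integrable_on cell I"
    and cell_le: "integral (cell I) (\<lambda>x. - cross I x) \<le> integral (cell I) (\<lambda>x. diag I x + gsq x)"
    if I: "I \<in> T" for I
  proof -
    have on_interior:
        "cross I x = (\<Sum>b\<in>Basis. MJ \<epsilon> \<phi> I b * (cell_grad I \<mu> \<bullet> b) * (cell_grad I \<nu> \<bullet> b))"
        "diag I x = (\<Sum>b\<in>Basis. MJ \<epsilon> \<phi> I b * (cell_grad I \<mu> \<bullet> b) * (cell_grad I \<mu> \<bullet> b))"
        "gsq x = (\<Sum>b\<in>Basis. (cell_grad I \<phi> \<bullet> b)^2)"
      if "x \<in> interior (cell I)" for x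
      using that by (simp_all add: cross_def diag_def gsq_def grad_P1[OF T _ I] \<phi> \<mu> \<nu>P1
          norm_sq_eq_sum_Basis)
    show cross: "cross I integrable_on cell I" and diag: "diag I integrable_on cell I"
      and gsq: "gsq integrable_on cell I"
      by (rule integrable_on_cell[OF continuous_on_const], erule on_interior)+
    show "integral (cell I) (\<lambda>x. - cross I x) \<le> integral (cell I) (\<lambda>x. diag I x + gsq x)"
      using mobility_cross_le[OF T I, where \<epsilon> = \<epsilon> and \<phi> = \<phi> and u = "cell_grad I \<mu>", folded \<nu>_def]
      by (intro integral_cell_mono integrable_neg integrable_add cross diag gsq) (simp add: on_interior)
  qed
  have "- mob_form \<epsilon> T \<phi> \<mu> \<nu> = (\<Sum>I\<in>T. integral (cell I) (\<lambda>x. - cross I x))"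
    by (simp add: mob_form_def cross_def sum_negf integral_neg)
  also have "\<dots> \<le> (\<Sum>I\<in>T. integral (cell I) (diag I) + integral (cell I) gsq)"
    using cell_le integrable by (intro sum_mono) (simp add: integral_add)
  also have "\<dots> = mob_form \<epsilon> T \<phi> \<mu> \<mu> + integral (mesh_domain T) gsq"
    using integrable by (simp add: mob_form_def diag_def[abs_def] sum.distrib integral_mesh[OF T])
  finally show ?thesis
    by (simp add: \<nu>_def gsq_def[abs_def])
qed

section \<open>One step of the scheme\<close>

lemma Jscheme_stepD:
  assumes "Jscheme_step \<eta> \<epsilon> T \<Omega> dt \<phi>old \<phi>new \<mu>new"
  shows "P1 T \<phi>new" "P1 T \<mu>new"
    and "\<And>\<mu>b. P1 T \<mu>b \<Longrightarrow>
      (1 / dt) * lumped T \<Omega> (\<lambda>x. \<phi>new x - \<phi>old x) \<mu>b + mob_form \<epsilon> T \<phi>new \<mu>new \<mu>b = 0"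
    and "\<And>\<phi>b. P1 T \<phi>b \<Longrightarrow>
      integral \<Omega> (\<lambda>x. grad \<phi>new x \<bullet> grad \<phi>b x)
      + integral \<Omega> (\<lambda>x. (deriv (Fc \<eta>) (\<phi>new x) + deriv (Fe \<eta>) (\<phi>old x)) * \<phi>b x)
      = lumped T \<Omega> \<mu>new \<phi>b"
  using assms unfolding Jscheme_step_def by auto

lemma Jscheme_step_energy_identity:
  assumes dt: "0 < dt" and old: "P1 T \<phi>old" and step: "Jscheme_step \<eta> \<epsilon> T \<Omega> dt \<phi>old \<phi>new \<mu>new"
  shows "integral \<Omega> (\<lambda>x. grad \<phi>new x \<bullet> grad (\<lambda>x. \<phi>new x - \<phi>old x) x)
      + integral \<Omega> (\<lambda>x. (deriv (Fc \<eta>) (\<phi>new x) + deriv (Fe \<eta>) (\<phi>old x)) * (\<phi>new x - \<phi>old x))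
    = - dt * mob_form \<epsilon> T \<phi>new \<mu>new \<mu>new"
proof -
  have "P1 T (\<lambda>x. \<phi>new x - \<phi>old x)"
    by (rule P1_diff[OF Jscheme_stepD(1)[OF step] old])
  from Jscheme_stepD(4)[OF step this]
  have "integral \<Omega> (\<lambda>x. grad \<phi>new x \<bullet> grad (\<lambda>x. \<phi>new x - \<phi>old x) x)
      + integral \<Omega> (\<lambda>x. (deriv (Fc \<eta>) (\<phi>new x) + deriv (Fe \<eta>) (\<phi>old x)) * (\<phi>new x - \<phi>old x))
    = lumped T \<Omega> \<mu>new (\<lambda>x. \<phi>new x - \<phi>old x)" .
  also have "\<dots> = lumped T \<Omega> (\<lambda>x. \<phi>new x - \<phi>old x) \<mu>new"
    by (simp add: lumped_def mult.commute)
  also have "\<dots> = - dt * mob_form \<epsilon> T \<phi>new \<mu>new \<mu>new"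
    using Jscheme_stepD(3)[OF step Jscheme_stepD(2)[OF step]] dt by (simp add: field_simps)
  finally show ?thesis .
qed

lemma energy_step_le:
  assumes T: "struct_triang T" and dt: "0 < dt" and old: "P1 T \<phi>old"
    and step: "Jscheme_step \<eta> \<epsilon> T (mesh_domain T) dt \<phi>old \<phi>new \<mu>new"
  shows "energy \<eta> (mesh_domain T) \<phi>new + dt * mob_form \<epsilon> T \<phi>new \<mu>new \<mu>new
    \<le> energy \<eta> (mesh_domain T) \<phi>old"
proof -
  note new = Jscheme_stepD(1)[OF step]
  define G1 where "G1 x = grad \<phi>new x \<bullet> grad (\<lambda>x. \<phi>new x - \<phi>old x) x" for x
  define G2 where "G2 x = (deriv (Fc \<eta>) (\<phi>new x) + deriv (Fe \<eta>) (\<phi>old x)) * (\<phi>new x - \<phi>old x)" for x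
  have G1: "G1 integrable_on mesh_domain T"
    unfolding G1_def by (rule integrable_grad_inner_P1[OF T new P1_diff[OF new old]])
  have "continuous_on (\<Union>(cell ` T)) \<phi>new" "continuous_on (\<Union>(cell ` T)) \<phi>old"
    using new old by (simp_all add: P1_def)
  then have G2: "G2 integrable_on mesh_domain T"
    unfolding G2_def[abs_def] deriv_Fc deriv_Fe by (intro integrable_on_mesh_continuous T continuous_intros)
  let ?e = "\<lambda>\<phi> x. (1/2) * (norm (grad \<phi> x))^2 + Fpot \<eta> (\<phi> x)"
  have "energy \<eta> (mesh_domain T) \<phi>new - energy \<eta> (mesh_domain T) \<phi>old
      = integral (mesh_domain T) (\<lambda>x. ?e \<phi>new x - ?e \<phi>old x)"
    unfolding energy_def
    by (rule integral_diff[symmetric]; intro integrable_energy_density_P1 T new old)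
  also have "\<dots> \<le> integral (mesh_domain T) (\<lambda>x. G1 x + G2 x)"
  proof (rule integral_le_off_negligible[OF negligible_skeleton[OF T]])
    show "(\<lambda>x. ?e \<phi>new x - ?e \<phi>old x) integrable_on mesh_domain T"
      by (intro integrable_diff integrable_energy_density_P1 T new old)
    show "(\<lambda>x. G1 x + G2 x) integrable_on mesh_domain T"
      by (rule integrable_add[OF G1 G2])
    fix x
    assume "x \<in> mesh_domain T - skeleton T"
    then obtain I where "I \<in> T" "x \<in> interior (cell I)"
      using in_interior_cell_if_not_skeleton by blast
    then have "grad (\<lambda>x. \<phi>new x - \<phi>old x) x = grad \<phi>new x - grad \<phi>old x"
      by (rule grad_diff_P1[OF T new old])
    then show "?e \<phi>new x - ?e \<phi>old x \<le> G1 x + G2 x"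
      using half_norm_sq_diff_le[of "grad \<phi>new x" "grad \<phi>old x"] Fpot_diff_le[of \<eta> "\<phi>new x" "\<phi>old x"]
      by (simp add: G1_def G2_def)
  qed
  also have "\<dots> = - dt * mob_form \<epsilon> T \<phi>new \<mu>new \<mu>new"
    using integral_add[OF G1 G2] Jscheme_step_energy_identity[OF dt old step]
    by (simp add: G1_def[abs_def] G2_def[abs_def])
  finally show ?thesis
    by simp
qed

lemma Jeps_integral_step_le:
  assumes T: "struct_triang T" and \<epsilon>: "0 < \<epsilon>" "\<epsilon> < 1/2" and dt: "0 < dt"
    and step: "Jscheme_step \<eta> \<epsilon> T (mesh_domain T) dt \<phi>old \<phi>new \<mu>new"
  shows "(integral (mesh_domain T) (Ih T (\<lambda>x. Jeps \<epsilon> (\<phi>new x)))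
      - integral (mesh_domain T) (Ih T (\<lambda>x. Jeps \<epsilon> (\<phi>old x)))) / dt
    \<le> mob_form \<epsilon> T \<phi>new \<mu>new \<mu>new + integral (mesh_domain T) (\<lambda>x. (norm (grad \<phi>new x))^2)"
proof -
  note new = Jscheme_stepD(1,2)[OF step]
  define \<nu> where "\<nu> = Ih T (\<lambda>x. deriv (Jeps \<epsilon>) (\<phi>new x))"
  define L where "L = lumped T (mesh_domain T) (\<lambda>x. \<phi>new x - \<phi>old x) \<nu>"
  have L: "L = - dt * mob_form \<epsilon> T \<phi>new \<mu>new \<nu>"
    using Jscheme_stepD(3)[OF step P1_Ih[OF T, of "\<lambda>x. deriv (Jeps \<epsilon>) (\<phi>new x)"]] dt
    unfolding L_def \<nu>_def by (simp add: field_simps)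
  have nodal: "Ih T (\<lambda>x. Jeps \<epsilon> (\<phi>new x)) y - Ih T (\<lambda>x. Jeps \<epsilon> (\<phi>old x)) y
      \<le> Ih T (\<lambda>x. (\<phi>new x - \<phi>old x) * \<nu> x) y" for y
  proof -
    have "0 \<le> Ih T (\<lambda>x. (\<phi>new x - \<phi>old x) * \<nu> x - (Jeps \<epsilon> (\<phi>new x) - Jeps \<epsilon> (\<phi>old x))) y"
      using Jeps_diff_le[OF \<epsilon>] by (intro Ih_nonneg[OF T]) (simp add: \<nu>_def Ih_vertex[OF T])
    then show ?thesis
      by (simp add: Ih_diff)
  qed
  have "integral (mesh_domain T) (Ih T (\<lambda>x. Jeps \<epsilon> (\<phi>new x)))
      - integral (mesh_domain T) (Ih T (\<lambda>x. Jeps \<epsilon> (\<phi>old x)))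
      = integral (mesh_domain T) (\<lambda>y. Ih T (\<lambda>x. Jeps \<epsilon> (\<phi>new x)) y - Ih T (\<lambda>x. Jeps \<epsilon> (\<phi>old x)) y)"
    by (rule integral_diff[symmetric]; rule integrable_Ih[OF T])
  also have "\<dots> \<le> L"
    unfolding L_def lumped_def using nodal
    by (intro integral_le integrable_diff integrable_Ih[OF T])
  also have "\<dots> \<le> dt * (mob_form \<epsilon> T \<phi>new \<mu>new \<mu>new + integral (mesh_domain T) (\<lambda>x. (norm (grad \<phi>new x))^2))"
    unfolding L \<nu>_def using mult_left_mono[OF mob_form_Ih_deriv_Jeps_ge[OF T new, where \<epsilon> = \<epsilon>], of dt] dt
    by simp
  finally show ?thesis
    using dt by (simp add: pos_divide_le_eq mult.commute)
qed

context
  fixes \<eta> \<epsilon> dt :: real and T :: "'a::euclidean_space elem set" and N :: nat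
    and \<phi> \<mu> :: "nat \<Rightarrow> 'a \<Rightarrow> real"
  assumes T: "struct_triang T" and \<epsilon>: "0 < \<epsilon>" "\<epsilon> < 1/2" and dt: "0 < dt"
    and initial: "P1 T (\<phi> 0)"
    and steps: "\<forall>m<N. Jscheme_step \<eta> \<epsilon> T (mesh_domain T) dt (\<phi> m) (\<phi> (Suc m)) (\<mu> (Suc m))"
begin

lemma Jscheme_iterate_P1: "m \<le> N \<Longrightarrow> P1 T (\<phi> m)"
proof (cases m)
  case (Suc k)
  assume "m \<le> N"
  with Suc steps have "Jscheme_step \<eta> \<epsilon> T (mesh_domain T) dt (\<phi> k) (\<phi> m) (\<mu> m)"
    by simp
  then show ?thesis
    by (rule Jscheme_stepD(1))
qed (simp add: initial)

lemma Jscheme_iterate_energy_le: "k \<le> N \<Longrightarrow> energy \<eta> (mesh_domain T) (\<phi> k) \<le> energy \<eta> (mesh_domain T) (\<phi> 0)"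
proof (induction k)
  case (Suc k)
  have "energy \<eta> (mesh_domain T) (\<phi> (Suc k))
      \<le> energy \<eta> (mesh_domain T) (\<phi> (Suc k)) + dt * mob_form \<epsilon> T (\<phi> (Suc k)) (\<mu> (Suc k)) (\<mu> (Suc k))"
    using dt mob_form_nonneg by (simp add: zero_le_mult_iff)
  also have "\<dots> \<le> energy \<eta> (mesh_domain T) (\<phi> k)"
    using Suc.prems steps by (intro energy_step_le T dt Jscheme_iterate_P1) auto
  finally show ?case
    using Suc by simp
qed simp

lemma Jscheme_iterate_Jeps_integral_le:
  "k \<le> N \<Longrightarrow> integral (mesh_domain T) (Ih T (\<lambda>x. Jeps \<epsilon> (\<phi> k x))) + energy \<eta> (mesh_domain T) (\<phi> k)
    \<le> integral (mesh_domain T) (Ih T (\<lambda>x. Jeps \<epsilon> (\<phi> 0 x)))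
      + (1 + 2 * real k * dt) * energy \<eta> (mesh_domain T) (\<phi> 0)"
proof (induction k)
  case (Suc k)
  let ?J = "\<lambda>k. integral (mesh_domain T) (Ih T (\<lambda>x. Jeps \<epsilon> (\<phi> k x)))"
    and ?E = "\<lambda>k. energy \<eta> (mesh_domain T) (\<phi> k)"
    and ?M = "mob_form \<epsilon> T (\<phi> (Suc k)) (\<mu> (Suc k)) (\<mu> (Suc k))"
    and ?G = "integral (mesh_domain T) (\<lambda>x. (norm (grad (\<phi> (Suc k)) x))^2)"
  have step: "Jscheme_step \<eta> \<epsilon> T (mesh_domain T) dt (\<phi> k) (\<phi> (Suc k)) (\<mu> (Suc k))"
    using Suc.prems steps by simp
  have "?J (Suc k) - ?J k \<le> dt * (?M + ?G)"
    using Jeps_integral_step_le[OF T \<epsilon> dt step] dt by (simp add: pos_divide_le_eq mult.commute)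
  moreover have "?E (Suc k) + dt * ?M \<le> ?E k"
    using Suc.prems by (intro energy_step_le[OF T dt _ step] Jscheme_iterate_P1) simp
  moreover have "?G \<le> 2 * ?E 0"
    using integral_grad_sq_le_energy[OF T Jscheme_iterate_P1[OF Suc.prems], of \<eta>]
      Jscheme_iterate_energy_le[OF Suc.prems] by simp
  then have "dt * ?G \<le> dt * (2 * ?E 0)"
    using dt by simp
  ultimately have "?J (Suc k) + ?E (Suc k) \<le> ?J k + ?E k + 2 * dt * ?E 0"
    by (simp add: distrib_left)
  then show ?case
    using Suc by (simp add: algebra_simps)
qed simp

end

lemma Jeps_integral_le_linear_in_time:
  assumes T: "struct_triang T" and \<epsilon>: "0 < \<epsilon>" "\<epsilon> < 1/2" and N: "0 < N" and Tf: "0 < Tf"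
    and initial: "P1 T (\<phi> 0)"
    and steps: "\<forall>m<N. Jscheme_step \<eta> \<epsilon> T (mesh_domain T) (Tf / real N) (\<phi> m) (\<phi> (Suc m)) (\<mu> (Suc m))"
    and n: "n < N"
  shows "integral (mesh_domain T) (Ih T (\<lambda>x. Jeps \<epsilon> (\<phi> (Suc n) x)))
    \<le> integral (mesh_domain T) (Ih T (\<lambda>x. Jeps \<epsilon> (\<phi> 0 x)))
      + energy \<eta> (mesh_domain T) (\<phi> 0) + 2 * energy \<eta> (mesh_domain T) (\<phi> 0) * Tf"
proof -
  have dt: "0 < Tf / real N"
    using N Tf by simp
  have "real (Suc n) * (Tf / real N) \<le> real N * (Tf / real N)"
    using n Tf by (intro mult_right_mono) auto
  also have "\<dots> = Tf"
    using N by simp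
  finally have "real (Suc n) * (Tf / real N) \<le> Tf" .
  then have "(1 + 2 * real (Suc n) * (Tf / real N)) * energy \<eta> (mesh_domain T) (\<phi> 0)
      \<le> (1 + 2 * Tf) * energy \<eta> (mesh_domain T) (\<phi> 0)"
    by (intro mult_right_mono energy_nonneg) linarith
  with Jscheme_iterate_Jeps_integral_le[OF T \<epsilon> dt initial steps, of "Suc n"]
    energy_nonneg[of \<eta> "mesh_domain T" "\<phi> (Suc n)"] n
  show ?thesis
    by (simp add: algebra_simps)
qed

theorem lemma7:
  shows
  "(\<forall>(\<T> :: ('a::euclidean_space) elem set) \<Omega> \<eta> \<epsilon> dt \<phi>old \<phi>new \<mu>new.
       DIM('a) \<le> 3 \<and> struct_triang \<T> \<and> \<Omega> = interior (\<Union>(cell ` \<T>))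
       \<and> \<eta> > 0 \<and> 0 < \<epsilon> \<and> \<epsilon> < 1/2 \<and> dt > 0
       \<and> P1 \<T> \<phi>old \<and> Jscheme_step \<eta> \<epsilon> \<T> \<Omega> dt \<phi>old \<phi>new \<mu>new
     \<longrightarrow> (integral \<Omega> (Ih \<T> (\<lambda>x. Jeps \<epsilon> (\<phi>new x)))
            - integral \<Omega> (Ih \<T> (\<lambda>x. Jeps \<epsilon> (\<phi>old x)))) / dt
         \<le> mob_form \<epsilon> \<T> \<phi>new \<mu>new \<mu>new + integral \<Omega> (\<lambda>x. (norm (grad \<phi>new x))^2))
   \<and>
   (\<exists>C1 C2 :: real \<Rightarrow> real \<Rightarrow> real.
     \<forall>(\<T> :: 'a elem set) \<Omega> \<eta> \<epsilon> (N::nat) (Tf::real) \<phi> \<mu> n.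
       DIM('a) \<le> 3 \<and> struct_triang \<T> \<and> \<Omega> = interior (\<Union>(cell ` \<T>))
       \<and> \<eta> > 0 \<and> 0 < \<epsilon> \<and> \<epsilon> < 1/2 \<and> N > 0 \<and> Tf > 0
       \<and> P1 \<T> (\<phi> 0)
       \<and> (\<forall>m<N. Jscheme_step \<eta> \<epsilon> \<T> \<Omega> (Tf / real N) (\<phi> m) (\<phi> (Suc m)) (\<mu> (Suc m)))
       \<and> n < N
     \<longrightarrow> integral \<Omega> (Ih \<T> (\<lambda>x. Jeps \<epsilon> (\<phi> (Suc n) x)))
         \<le> C1 (energy \<eta> \<Omega> (\<phi> 0)) (integral \<Omega> (Ih \<T> (\<lambda>x. Jeps \<epsilon> (\<phi> 0 x))))
           + C2 (energy \<eta> \<Omega> (\<phi> 0)) (integral \<Omega> (Ih \<T> (\<lambda>x. Jeps \<epsilon> (\<phi> 0 x)))) * Tf)"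
proof (rule conjI; (rule exI[of _ "\<lambda>E J0. J0 + E"], rule exI[of _ "\<lambda>E J0. 2 * E"])?;
    intro allI impI; elim conjE)
  fix T :: "'a elem set" and \<Omega> \<eta> \<epsilon> dt \<phi>old \<phi>new \<mu>new
  assume \<Omega>: "\<Omega> = mesh_domain T"
    and hyps: "struct_triang T" "0 < \<epsilon>" "\<epsilon> < 1/2" "0 < dt" "Jscheme_step \<eta> \<epsilon> T \<Omega> dt \<phi>old \<phi>new \<mu>new"
  from hyps show "(integral \<Omega> (Ih T (\<lambda>x. Jeps \<epsilon> (\<phi>new x)))
      - integral \<Omega> (Ih T (\<lambda>x. Jeps \<epsilon> (\<phi>old x)))) / dt
    \<le> mob_form \<epsilon> T \<phi>new \<mu>new \<mu>new + integral \<Omega> (\<lambda>x. (norm (grad \<phi>new x))^2)"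
    unfolding \<Omega> by (rule Jeps_integral_step_le)
next
  fix T :: "'a elem set" and \<Omega> \<eta> \<epsilon> N Tf \<phi> \<mu> n
  assume \<Omega>: "\<Omega> = mesh_domain T"
    and hyps: "struct_triang T" "0 < \<epsilon>" "\<epsilon> < 1/2" "0 < N" "0 < Tf" "P1 T (\<phi> 0)"
      "\<forall>m<N. Jscheme_step \<eta> \<epsilon> T \<Omega> (Tf / real N) (\<phi> m) (\<phi> (Suc m)) (\<mu> (Suc m))" "n < N"
  from hyps show "integral \<Omega> (Ih T (\<lambda>x. Jeps \<epsilon> (\<phi> (Suc n) x)))
    \<le> integral \<Omega> (Ih T (\<lambda>x. Jeps \<epsilon> (\<phi> 0 x))) + energy \<eta> \<Omega> (\<phi> 0)
      + 2 * energy \<eta> \<Omega> (\<phi> 0) * Tf"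
    unfolding \<Omega> by (rule Jeps_integral_le_linear_in_time)
qed

end
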